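(* Let $\alpha>0$, $\alpha\neq1$, and let $\rho,\sigma$ be density operators on a finite-dimensional Hilbert space with $\operatorname{supp}(\rho)\subseteq\operatorname{supp}(\sigma)$. Then $$S_{\alpha}(\rho\|\sigma)=\hat{D}_{1/\alpha}\big(\rho^{(\alpha)}\|\sigma^{(\alpha)}\big),$$ where $\rho^{(\alpha)}=\rho^{\alpha}/\operatorname{Tr}(\rho^{\alpha})$ and $\sigma^{(\alpha)}=\sigma^{\alpha}/\operatorname{Tr}(\sigma^{\alpha})$.
   Context: A density operator is a positive semidefinite operator of unit trace; $\operatorname{supp}$ denotes the span of eigenvectors with nonzero eigenvalues. The quantum relative $\alpha$-entropy is $S_{\alpha}(\rho\|\sigma)=\frac{\alpha}{1-\alpha}\log\operatorname{Tr}(\rho\sigma^{\alpha-1})-\frac{1}{1-\alpha}\log\operatorname{Tr}(\rho^{\alpha})+\log\operatorname{Tr}(\sigma^{\alpha})$ (negative powers of $\sigma$ taken on its support). The Petz–Rényi relative entropy of order $\beta>0$, $\beta\ne1$, is $\hat{D}_{\beta}(\rho\|\sigma)=\frac{1}{\beta-1}\log\operatorname{Tr}(\rho^{\beta}\sigma^{1-\beta})$. *)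

theory Defs
  imports Complex_Main "Jordan_Normal_Form.Matrix"
begin

definition mtrace :: "complex mat \<Rightarrow> complex" where
  "mtrace A = (\<Sum>i<dim_row A. A $$ (i,i))"

definition adj :: "complex mat \<Rightarrow> complex mat" where
  "adj A = mat (dim_col A) (dim_row A) (\<lambda>(i,j). cnj (A $$ (j,i)))"

definition unitary :: "nat \<Rightarrow> complex mat \<Rightarrow> bool" where
  "unitary n U \<longleftrightarrow> U \<in> carrier_mat n n \<and> U * adj U = 1\<^sub>m n \<and> adj U * U = 1\<^sub>m n"

definition hermitian :: "nat \<Rightarrow> complex mat \<Rightarrow> bool" where
  "hermitian n A \<longleftrightarrow> A \<in> carrier_mat n n \<and> adj A = A"

definition psd :: "nat \<Rightarrow> complex mat \<Rightarrow> bool" where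
  "psd n A \<longleftrightarrow> hermitian n A \<and>
     (\<forall>v \<in> carrier_vec n. 0 \<le> Re (scalar_prod (map_vec cnj v) (A *\<^sub>v v)))"

definition density :: "nat \<Rightarrow> complex mat \<Rightarrow> bool" where
  "density n A \<longleftrightarrow> psd n A \<and> mtrace A = 1"

definition rdiag :: "nat \<Rightarrow> (nat \<Rightarrow> real) \<Rightarrow> complex mat" where
  "rdiag n d = mat n n (\<lambda>(i,j). if i = j then complex_of_real (d i) else 0)"

text \<open>Since 0 powr t = 0,
  powers (including negative ones) are taken on the support only.\<close>
definition mpow :: "nat \<Rightarrow> complex mat \<Rightarrow> real \<Rightarrow> complex mat" where
  "mpow n A t = (SOME B. \<exists>U d. unitary n U \<and> A = U * rdiag n d * adj U \<and>
                      B = U * rdiag n (\<lambda>i. d i powr t) * adj U)"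

text \<open>Support: span of the eigenvectors with nonzero eigenvalues (finite sums of such
  eigenvectors, the scalars being absorbed into the eigenvectors).\<close>
definition supp :: "nat \<Rightarrow> complex mat \<Rightarrow> complex vec set" where
  "supp n A = {foldr (+) vs (0\<^sub>v n) | vs.
      \<forall>v \<in> set vs. v \<in> carrier_vec n \<and> (\<exists>c. c \<noteq> 0 \<and> A *\<^sub>v v = c \<cdot>\<^sub>v v)}"

definition rtr :: "complex mat \<Rightarrow> real" where
  "rtr A = Re (mtrace A)"

definition S_alpha :: "nat \<Rightarrow> real \<Rightarrow> complex mat \<Rightarrow> complex mat \<Rightarrow> real" where
  "S_alpha n \<alpha> \<rho> \<sigma> =
     \<alpha> / (1 - \<alpha>) * ln (rtr (\<rho> * mpow n \<sigma> (\<alpha> - 1)))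
     - 1 / (1 - \<alpha>) * ln (rtr (mpow n \<rho> \<alpha>))
     + ln (rtr (mpow n \<sigma> \<alpha>))"

definition petz :: "nat \<Rightarrow> real \<Rightarrow> complex mat \<Rightarrow> complex mat \<Rightarrow> real" where
  "petz n \<beta> \<rho> \<sigma> = 1 / (\<beta> - 1) * ln (rtr (mpow n \<rho> \<beta> * mpow n \<sigma> (1 - \<beta>)))"

definition normpow :: "nat \<Rightarrow> complex mat \<Rightarrow> real \<Rightarrow> complex mat" where
  "normpow n A \<alpha> = (1 / mtrace (mpow n A \<alpha>)) \<cdot>\<^sub>m mpow n A \<alpha>"

end

theory Submission
  imports Defs "Jordan_Normal_Form.Spectral_Radius" "HOL-Library.Complex_Order"
begin

text \<open>Every Hermitian matrix has a unitary diagonalisation, and mpow does not depend on the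
  diagonalisation chosen, so it obeys (r A^a)^t = r^t A^(a t). With c = Tr \<rho>^\<alpha> and
  s = Tr \<sigma>^\<alpha> this gives (\<rho>^(\<alpha>))^(1/\<alpha>) = c^(-1/\<alpha>) \<rho> and
  (\<sigma>^(\<alpha>))^(1-1/\<alpha>) = s^(1/\<alpha>-1) \<sigma>^(\<alpha>-1), so the Petz trace is
  c^(-1/\<alpha>) s^(1/\<alpha>-1) Tr(\<rho> \<sigma>^(\<alpha>-1)), and taking logarithms yields the identity.
  All three traces are positive, the last one because supp \<rho> \<subseteq> supp \<sigma>.\<close>

lemma adj_carrier [simp]: "A \<in> carrier_mat n m \<Longrightarrow> adj A \<in> carrier_mat m n"
  unfolding adj_def by auto

lemma adj_dims [simp]: "dim_row (adj A) = dim_col A" "dim_col (adj A) = dim_row A"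
  unfolding adj_def by auto

lemma adj_index [simp]:
  "i < dim_col A \<Longrightarrow> j < dim_row A \<Longrightarrow> adj A $$ (i, j) = cnj (A $$ (j, i))"
  unfolding adj_def by auto

lemma adj_adj [simp]: "adj (adj A) = A"
  by (rule eq_matI) auto

lemma adj_mult:
  assumes "A \<in> carrier_mat n m" "B \<in> carrier_mat m k"
  shows "adj (A * B) = adj B * adj A"
  by (rule eq_matI) (use assms in \<open>auto simp: scalar_prod_def mult.commute\<close>)

lemma rdiag_carrier [simp]: "rdiag n d \<in> carrier_mat n n"
  unfolding rdiag_def by auto

lemma rdiag_dims [simp]: "dim_row (rdiag n d) = n" "dim_col (rdiag n d) = n"
  unfolding rdiag_def by auto

lemma rdiag_index [simp]:
  "i < n \<Longrightarrow> j < n \<Longrightarrow> rdiag n d $$ (i, j) = (if i = j then complex_of_real (d i) else 0)"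
  unfolding rdiag_def by auto

lemma adj_rdiag [simp]: "adj (rdiag n d) = rdiag n d"
  by (rule eq_matI) auto

lemma rdiag_cong: "(\<And>i. i < n \<Longrightarrow> d i = e i) \<Longrightarrow> rdiag n d = rdiag n e"
  by (rule eq_matI) auto

lemma smult_rdiag: "complex_of_real r \<cdot>\<^sub>m rdiag n d = rdiag n (\<lambda>i. r * d i)"
  by (rule eq_matI) auto

lemma rdiag_mult_left:
  assumes "W \<in> carrier_mat n m"
  shows "rdiag n d * W = mat n m (\<lambda>(i, j). d i * W $$ (i, j))"
  by (rule eq_matI) (use assms in \<open>auto simp: scalar_prod_def if_distrib[of "\<lambda>x. x * _"]
      if_distribR sum.delta cong: if_cong\<close>)

lemma rdiag_mult_right:
  assumes "W \<in> carrier_mat m n"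
  shows "W * rdiag n d = mat m n (\<lambda>(i, j). W $$ (i, j) * d j)"
  by (rule eq_matI) (use assms in \<open>auto simp: scalar_prod_def if_distrib[of "\<lambda>x. _ * x"]
      sum.delta' cong: if_cong\<close>)

text \<open>In the general lemmas the inner dimensions occur only in the premises, so the simplifier
  cannot instantiate them; hence these instances for n x n matrices.\<close>
lemmas square_mult_simps = assoc_mult_mat[of _ n n _ n _ n] mult_carrier_mat[of _ n n _ n] for n

lemma mtrace_mult_comm:
  assumes "A \<in> carrier_mat n m" "B \<in> carrier_mat m n"
  shows "mtrace (A * B) = mtrace (B * A)"
proof -
  have "mtrace (A * B) = (\<Sum>i<n. \<Sum>k<m. A $$ (i, k) * B $$ (k, i))"
    using assms by (auto simp: mtrace_def scalar_prod_def atLeast0LessThan intro!: sum.cong)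
  also have "\<dots> = (\<Sum>k<m. \<Sum>i<n. B $$ (k, i) * A $$ (i, k))"
    by (subst sum.swap) (simp add: mult.commute)
  also have "\<dots> = mtrace (B * A)"
    using assms by (auto simp: mtrace_def scalar_prod_def atLeast0LessThan intro!: sum.cong)
  finally show ?thesis .
qed

lemma rtr_smult: "A \<in> carrier_mat n n \<Longrightarrow> rtr (complex_of_real r \<cdot>\<^sub>m A) = r * rtr A"
  unfolding rtr_def mtrace_def by (auto simp: sum_distrib_left intro!: sum.cong)

lemma unitaryD:
  assumes "unitary n U"
  shows "U \<in> carrier_mat n n" "adj U \<in> carrier_mat n n" "U * adj U = 1\<^sub>m n" "adj U * U = 1\<^sub>m n"
  using assms unfolding unitary_def by auto

lemma unitary_cancel:
  assumes "unitary n U" "X \<in> carrier_mat n n"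
  shows "U * (adj U * X) = X" "adj U * (U * X) = X"
  using unitaryD[OF assms(1)] assms(2)
  by (simp_all flip: assoc_mult_mat[of _ n n _ n _ n])

lemma unitary_adj: "unitary n U \<Longrightarrow> unitary n (adj U)"
  unfolding unitary_def by auto

lemma unitary_mult:
  assumes "unitary n U" "unitary n V"
  shows "unitary n (U * V)"
proof -
  note u = unitaryD[OF assms(1)] and v = unitaryD[OF assms(2)]
  have "U * V * adj (U * V) = 1\<^sub>m n" "adj (U * V) * (U * V) = 1\<^sub>m n"
    using u v by (simp_all add: adj_mult[of _ n n _ n] square_mult_simps[where n=n]
        unitary_cancel[OF assms(1)] unitary_cancel[OF assms(2)])
  then show ?thesis
    using u v unfolding unitary_def by simp
qed

lemma mtrace_unitary_diag:
  assumes "unitary n U"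
  shows "mtrace (U * rdiag n d * adj U) = complex_of_real (\<Sum>i<n. d i)"
proof -
  note u = unitaryD[OF assms]
  have "mtrace (U * rdiag n d * adj U) = mtrace (rdiag n d * adj U * U)"
    using u
    by (simp add: square_mult_simps[where n=n] mtrace_mult_comm[of U n n "rdiag n d * adj U"])
  also have "rdiag n d * adj U * U = rdiag n d"
    using u by (simp add: square_mult_simps[where n=n])
  finally show ?thesis
    unfolding mtrace_def by simp
qed

lemma smult_unitary_diag:
  assumes "U \<in> carrier_mat n n"
  shows "complex_of_real r \<cdot>\<^sub>m (U * rdiag n d * adj U) = U * rdiag n (\<lambda>i. r * d i) * adj U"
  using assms by (simp add: mult_smult_assoc_mat[of _ n n _ n] mult_smult_distrib[of _ n n _ n]
      flip: smult_rdiag)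

lemma hermitian_unitary_diag: "unitary n U \<Longrightarrow> hermitian n (U * rdiag n d * adj U)"
  using unitaryD[of n U] unfolding hermitian_def
  by (simp add: adj_mult[of _ n n _ n] square_mult_simps[where n=n])

text \<open>Two unitary diagonalisations of the same matrix differ by a unitary W that intertwines
  the diagonals: d i W_ij = W_ij e j. So W_ij \<noteq> 0 forces d i = e j, and W also intertwines
  any function of the diagonals.\<close>
lemma unitary_diag_fun_eq:
  assumes U: "unitary n U" and V: "unitary n V"
    and eq: "U * rdiag n d * adj U = V * rdiag n e * adj V"
  shows "U * rdiag n (\<lambda>i. f (d i)) * adj U = V * rdiag n (\<lambda>i. f (e i)) * adj V"
proof -
  note u = unitaryD[OF U] and v = unitaryD[OF V]
  define W where "W = adj U * V"
  have W: "W \<in> carrier_mat n n"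
    using u v unfolding W_def by auto
  have "rdiag n d * W = adj U * (U * rdiag n d * adj U) * V"
    using u v unfolding W_def by (simp add: square_mult_simps[where n=n] unitary_cancel[OF U])
  also have "\<dots> = W * rdiag n e"
    using u v unfolding eq W_def by (simp add: square_mult_simps[where n=n] unitary_cancel[OF V])
  finally have comm: "rdiag n d * W = W * rdiag n e" .
  have entry: "d i * W $$ (i, j) = W $$ (i, j) * e j" if "i < n" "j < n" for i j
    using arg_cong[OF comm, of "\<lambda>M. M $$ (i, j)"] that W
    by (simp add: rdiag_mult_left rdiag_mult_right)
  have "f (d i) * W $$ (i, j) = W $$ (i, j) * f (e j)" if "i < n" "j < n" for i j
  proof (cases "W $$ (i, j) = 0")
    case False
    with entry[OF that] have "complex_of_real (d i) = e j"
      by (simp add: mult.commute)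
    then show ?thesis by simp
  qed simp
  then have commf: "rdiag n (\<lambda>i. f (d i)) * W = W * rdiag n (\<lambda>i. f (e i))"
    using W by (intro eq_matI) (auto simp: rdiag_mult_left rdiag_mult_right)
  have "U * rdiag n (\<lambda>i. f (d i)) * adj U = U * (rdiag n (\<lambda>i. f (d i)) * W) * adj V"
    using u v unfolding W_def by (simp add: square_mult_simps[where n=n] unitary_cancel[OF V])
  also have "\<dots> = U * (W * rdiag n (\<lambda>i. f (e i))) * adj V"
    by (simp only: commf)
  also have "\<dots> = V * rdiag n (\<lambda>i. f (e i)) * adj V"
    using u v unfolding W_def by (simp add: square_mult_simps[where n=n] unitary_cancel[OF U])
  finally show ?thesis .
qed

lemma mpow_unitary_diag:
  assumes U: "unitary n U" and A: "A = U * rdiag n d * adj U"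
  shows "mpow n A t = U * rdiag n (\<lambda>i. d i powr t) * adj U"
proof -
  let ?P = "\<lambda>B. \<exists>U d. unitary n U \<and> A = U * rdiag n d * adj U \<and>
    B = U * rdiag n (\<lambda>i. d i powr t) * adj U"
  have "?P (U * rdiag n (\<lambda>i. d i powr t) * adj U)"
    using U A by blast
  from someI[of ?P, OF this] obtain V e where V: "unitary n V" and Ae: "A = V * rdiag n e * adj V"
    and mpow: "mpow n A t = V * rdiag n (\<lambda>i. e i powr t) * adj V"
    unfolding mpow_def by blast
  show ?thesis
    unfolding mpow using unitary_diag_fun_eq[OF V U, of e d "\<lambda>x. x powr t"] A Ae by simp
qed

lemma cscalar_prod_self_pos:
  fixes w :: "complex vec"
  assumes "w \<in> carrier_vec n" "w \<noteq> 0\<^sub>v n"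
  shows "0 < Re (w \<bullet>c w)" "w \<bullet>c w = complex_of_real (Re (w \<bullet>c w))"
proof -
  have "w \<bullet>c w > 0"
    using assms by simp
  then show "0 < Re (w \<bullet>c w)" "w \<bullet>c w = complex_of_real (Re (w \<bullet>c w))"
    by (auto simp: less_complex_def complex_eq_iff)
qed

lemma unitary_normalise_corthogonal:
  fixes ws :: "complex vec list"
  assumes ws: "set ws \<subseteq> carrier_vec n" "corthogonal ws" "length ws = n"
  shows "unitary n (mat_of_cols n (map (\<lambda>w. complex_of_real (1 / sqrt (Re (w \<bullet>c w))) \<cdot>\<^sub>v w) ws))"
    (is "unitary n ?W")
proof -
  define c where "c w = complex_of_real (1 / sqrt (Re (w \<bullet>c w)))" for w :: "complex vec"
  have wsc: "ws ! i \<in> carrier_vec n" if "i < n" for i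
    using ws that by auto
  have W: "?W \<in> carrier_mat n n"
    using ws(3) by auto
  have colW: "col ?W i = c (ws ! i) \<cdot>\<^sub>v ws ! i" if "i < n" for i
    unfolding c_def using ws wsc that by simp
  have "adj ?W * ?W = 1\<^sub>m n"
  proof (rule eq_matI)
    fix i j
    assume "i < dim_row (1\<^sub>m n)" "j < dim_col (1\<^sub>m n)"
    then have ij: "i < n" "j < n"
      by auto
    have "(adj ?W * ?W) $$ (i, j) = col ?W j \<bullet>c col ?W i"
      using W ij by (auto simp: scalar_prod_def mult.commute intro!: sum.cong)
    also have "\<dots> = (c (ws ! j) * cnj (c (ws ! i))) * (ws ! j \<bullet>c ws ! i)"
      unfolding colW[OF ij(1)] colW[OF ij(2)] using wsc[OF ij(1)] wsc[OF ij(2)]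
      by (simp add: conjugate_smult_vec smult_scalar_prod_distrib[of _ n]
          scalar_prod_smult_distrib[of _ n])
    also have "\<dots> = (if i = j then 1 else 0)"
    proof (cases "i = j")
      case True
      define r where "r = Re (ws ! j \<bullet>c ws ! j)"
      have "ws ! j \<noteq> 0\<^sub>v n"
        using corthogonalD[OF ws(2), of j j] ij ws(3) wsc[OF ij(2)] by auto
      then have r: "0 < r" "ws ! j \<bullet>c ws ! j = complex_of_real r"
        using cscalar_prod_self_pos[OF wsc[OF ij(2)]] unfolding r_def by auto
      have "(c (ws ! j) * cnj (c (ws ! j))) * (ws ! j \<bullet>c ws ! j)
          = complex_of_real (1 / sqrt r * (1 / sqrt r) * r)"
        unfolding c_def r_def[symmetric] r(2) by (simp flip: of_real_mult)
      also have "\<dots> = 1"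
        using r by (simp add: field_simps)
      finally show ?thesis
        using True by simp
    next
      case False
      with corthogonalD[OF ws(2), of j i] ij ws(3) show ?thesis
        by auto
    qed
    finally show "(adj ?W * ?W) $$ (i, j) = 1\<^sub>m n $$ (i, j)"
      using ij by simp
  qed (use W in auto)
  moreover have "?W * adj ?W = 1\<^sub>m n"
    using mat_mult_left_right_inverse[OF _ W \<open>adj ?W * ?W = 1\<^sub>m n\<close>] W by auto
  ultimately show ?thesis
    using W unfolding unitary_def by auto
qed

text \<open>Gram-Schmidt applied to a basis completion of v keeps v as first vector.\<close>
lemma unitary_first_col_exists:
  fixes v :: "complex vec"
  assumes v: "v \<in> carrier_vec n" and v0: "v \<noteq> 0\<^sub>v n"
  shows "\<exists>W c. unitary n W \<and> col W 0 = c \<cdot>\<^sub>v v"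
proof -
  interpret cof_vec_space n "TYPE(complex)" .
  define b where "b = basis_completion v"
  define ws where "ws = gram_schmidt n b"
  from basis_completion[OF v v0, folded b_def]
  have dist_b: "distinct b" and indep: "\<not> lin_dep (set b)" and b: "set b \<subseteq> carrier_vec n"
    and hd_b: "hd b = v" and len_b: "length b = n"
    by auto
  have "n \<noteq> 0"
    using v v0 by (metis carrier_vecD eq_vecI index_zero_vec(2) less_zeroE)
  with hd_b len_b obtain vs where b_Cons: "b = v # vs"
    by (cases b) auto
  from gram_schmidt_result[OF b dist_b indep refl, folded ws_def]
  have ws: "set ws \<subseteq> carrier_vec n" "corthogonal ws" "length ws = n"
    by (auto simp: len_b)
  have "hd ws = v"
    using gram_schmidt_hd[OF v, of vs, folded b_Cons] unfolding ws_def .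
  with ws(3) \<open>n \<noteq> 0\<close> have "ws ! 0 = v"
    by (metis hd_conv_nth length_0_conv)
  then have "col (mat_of_cols n (map (\<lambda>w. complex_of_real (1 / sqrt (Re (w \<bullet>c w))) \<cdot>\<^sub>v w) ws)) 0
      = complex_of_real (1 / sqrt (Re (v \<bullet>c v))) \<cdot>\<^sub>v v"
    using ws v \<open>n \<noteq> 0\<close> by (subst col_mat_of_cols) auto
  then show ?thesis
    using unitary_normalise_corthogonal[OF ws] by blast
qed

lemma col_unitary_conj_eigenvector:
  assumes W: "unitary n W" and "0 < n" and A: "A \<in> carrier_mat n n"
    and eig: "A *\<^sub>v col W 0 = a \<cdot>\<^sub>v col W 0"
  shows "col (adj W * A * W) 0 = a \<cdot>\<^sub>v unit_vec n 0"
proof -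
  note w = unitaryD[OF W]
  have "col (adj W * A * W) 0 = (adj W * A) *\<^sub>v col W 0"
    using w A \<open>0 < n\<close> by (subst col_mult2[of _ n n _ n]) auto
  also have "\<dots> = adj W *\<^sub>v (A *\<^sub>v col W 0)"
    using w A \<open>0 < n\<close> by (subst assoc_mult_mat_vec[of _ n n _ n]) auto
  also have "\<dots> = a \<cdot>\<^sub>v (adj W *\<^sub>v col W 0)"
    unfolding eig using w \<open>0 < n\<close> by (simp add: mult_mat_vec[of _ n n])
  also have "adj W *\<^sub>v col W 0 = col (adj W * W) 0"
    using w \<open>0 < n\<close> by (subst col_mult2[of _ n n _ n]) auto
  finally show ?thesis
    using w \<open>0 < n\<close> by simp
qed

text \<open>Hermiticity turns the first column a e_0 into the first row cnj a e_0^T, so a is real.\<close>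
lemma hermitian_block_of_col:
  assumes A: "hermitian (Suc m) A" and col: "col A 0 = a \<cdot>\<^sub>v unit_vec (Suc m) 0"
  shows "\<exists>r B. hermitian m B \<and> A = four_block_mat (rdiag 1 (\<lambda>_. r)) (0\<^sub>m 1 m) (0\<^sub>m m 1) B"
proof -
  have Ac: "A \<in> carrier_mat (Suc m) (Suc m)" and adjA: "adj A = A"
    using A unfolding hermitian_def by auto
  have Ai0: "A $$ (i, 0) = (if i = 0 then a else 0)" if "i < Suc m" for i
    using arg_cong[OF col, of "\<lambda>x. x $ i"] that Ac by auto
  have A0j: "A $$ (0, j) = (if j = 0 then cnj a else 0)" if "j < Suc m" for j
    using arg_cong[OF adjA, of "\<lambda>M. M $$ (0, j)"] Ai0[OF that] that Ac by auto
  have a_real: "a = complex_of_real (Re a)"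
    using Ai0[of 0] A0j[of 0] by (simp add: complex_eq_iff)
  define B where "B = mat m m (\<lambda>(i, j). A $$ (Suc i, Suc j))"
  have "adj B = B"
  proof (rule eq_matI)
    fix i j
    assume "i < dim_row B" "j < dim_col B"
    then show "adj B $$ (i, j) = B $$ (i, j)"
      using arg_cong[OF adjA, of "\<lambda>M. M $$ (Suc i, Suc j)"] Ac by (auto simp: B_def)
  qed (auto simp: B_def)
  then have "hermitian m B"
    unfolding hermitian_def B_def by auto
  moreover have "A = four_block_mat (rdiag 1 (\<lambda>_. Re a)) (0\<^sub>m 1 m) (0\<^sub>m m 1) B"
  proof (rule eq_matI)
    fix i j
    assume "i < dim_row (four_block_mat (rdiag 1 (\<lambda>_. Re a)) (0\<^sub>m 1 m) (0\<^sub>m m 1) B)"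
      and "j < dim_col (four_block_mat (rdiag 1 (\<lambda>_. Re a)) (0\<^sub>m 1 m) (0\<^sub>m m 1) B)"
    then have ij: "i < Suc m" "j < Suc m"
      by (auto simp: B_def)
    show "A $$ (i, j) = four_block_mat (rdiag 1 (\<lambda>_. Re a)) (0\<^sub>m 1 m) (0\<^sub>m m 1) B $$ (i, j)"
      using Ai0[OF ij(1)] A0j[OF ij(2)] a_real ij by (cases i; cases j) (auto simp: B_def)
  qed (use Ac in \<open>auto simp: B_def\<close>)
  ultimately show ?thesis
    by blast
qed

lemma adj_block_diag:
  assumes "U \<in> carrier_mat m m"
  shows "adj (four_block_mat (1\<^sub>m 1) (0\<^sub>m 1 m) (0\<^sub>m m 1) U)
    = four_block_mat (1\<^sub>m 1) (0\<^sub>m 1 m) (0\<^sub>m m 1) (adj U)"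
  by (rule eq_matI) (use assms in auto)

lemma unitary_block_diag:
  assumes U: "unitary m U"
  shows "unitary (Suc m) (four_block_mat (1\<^sub>m 1) (0\<^sub>m 1 m) (0\<^sub>m m 1) U)"
  using unitaryD[OF U] unfolding unitary_def adj_block_diag[OF unitaryD(1)[OF U]]
  by (auto simp: mult_four_block_mat[of _ 1 1 _ m _ m _ _ 1 _ m])

lemma block_diag_unitary_diag:
  assumes U: "U \<in> carrier_mat m m"
  defines "P \<equiv> four_block_mat (1\<^sub>m 1) (0\<^sub>m 1 m) (0\<^sub>m m 1) U"
  shows "four_block_mat (rdiag 1 (\<lambda>_. r)) (0\<^sub>m 1 m) (0\<^sub>m m 1) (U * rdiag m e * adj U)
    = P * rdiag (Suc m) (case_nat r e) * adj P"
proof -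
  have "rdiag (Suc m) (case_nat r e)
      = four_block_mat (rdiag 1 (\<lambda>_. r)) (0\<^sub>m 1 m) (0\<^sub>m m 1) (rdiag m e)"
    by (rule eq_matI) (auto split: nat.split)
  moreover have "U * rdiag m e * adj U \<in> carrier_mat m m"
    using U by auto
  ultimately show ?thesis
    unfolding P_def adj_block_diag[OF U] using U
    by (simp add: mult_four_block_mat[of _ 1 1 _ m _ m _ _ 1 _ m])
qed

theorem hermitian_unitary_diagonalisation:
  "hermitian n A \<Longrightarrow> \<exists>U d. unitary n U \<and> A = U * rdiag n d * adj U"
proof (induction n arbitrary: A)
  case 0
  then have "A = 1\<^sub>m 0 * rdiag 0 (\<lambda>_. 0) * adj (1\<^sub>m 0)"
    unfolding hermitian_def by (intro eq_matI) auto
  moreover have "unitary 0 (1\<^sub>m 0)"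
    unfolding unitary_def by auto
  ultimately show ?case
    by blast
next
  case (Suc m)
  have Ac: "A \<in> carrier_mat (Suc m) (Suc m)"
    using Suc.prems unfolding hermitian_def by auto
  obtain a v where v: "v \<in> carrier_vec (Suc m)" "v \<noteq> 0\<^sub>v (Suc m)" "A *\<^sub>v v = a \<cdot>\<^sub>v v"
    using spectrum_non_empty[OF Ac] Ac unfolding spectrum_def eigenvalue_def eigenvector_def by auto
  obtain W c where W: "unitary (Suc m) W" and colW: "col W 0 = c \<cdot>\<^sub>v v"
    using unitary_first_col_exists[OF v(1,2)] by blast
  have "A *\<^sub>v col W 0 = a \<cdot>\<^sub>v col W 0"
    unfolding colW using Ac v by (simp add: mult_mat_vec[OF Ac v(1)] smult_smult_assoc mult.commute)
  then have "col (adj W * A * W) 0 = a \<cdot>\<^sub>v unit_vec (Suc m) 0"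
    using col_unitary_conj_eigenvector[OF W _ Ac] by simp
  moreover have "hermitian (Suc m) (adj W * A * W)"
    using Suc.prems unitaryD[OF W] unfolding hermitian_def
    by (simp add: adj_mult[of _ "Suc m" "Suc m" _ "Suc m"] square_mult_simps[where n="Suc m"])
  ultimately obtain r B where B: "hermitian m B"
    and A': "adj W * A * W = four_block_mat (rdiag 1 (\<lambda>_. r)) (0\<^sub>m 1 m) (0\<^sub>m m 1) B"
    using hermitian_block_of_col by blast
  obtain U d where U: "unitary m U" and "B = U * rdiag m d * adj U"
    using Suc.IH[OF B] by blast
  with A' obtain P where P: "unitary (Suc m) P"
    and "adj W * A * W = P * rdiag (Suc m) (case_nat r d) * adj P"
    using block_diag_unitary_diag[OF unitaryD(1)[OF U]] unitary_block_diag[OF U] by metis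
  moreover have "A = W * (adj W * A * W) * adj W"
    using unitaryD[OF W] Ac by (simp add: square_mult_simps[where n="Suc m"] unitary_cancel[OF W])
  ultimately have "A = (W * P) * rdiag (Suc m) (case_nat r d) * adj (W * P)"
    using unitaryD[OF W] unitaryD[OF P]
    by (simp add: adj_mult[of _ "Suc m" "Suc m" _ "Suc m"] square_mult_simps[where n="Suc m"])
  then show ?case
    using unitary_mult[OF W P] by blast
qed

lemma psd_unitary_diag_nonneg:
  assumes A_psd: "psd n A" and U: "unitary n U" and A: "A = U * rdiag n d * adj U" and i: "i < n"
  shows "0 \<le> d i"
proof -
  note u = unitaryD[OF U]
  define v where "v = col U i"
  have v: "v \<in> carrier_vec n"
    unfolding v_def using u i by auto
  have Ac: "A \<in> carrier_mat n n"
    unfolding A using u by auto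
  have "complex_of_real (d i) = (adj U * (A * U)) $$ (i, i)"
    unfolding A using u i by (simp add: square_mult_simps[where n=n] unitary_cancel[OF U])
  also have "\<dots> = row (adj U) i \<bullet> col (A * U) i"
    using u Ac i by simp
  also have "row (adj U) i = map_vec cnj v"
    unfolding v_def using u i by (intro eq_vecI) auto
  also have "col (A * U) i = A *\<^sub>v v"
    unfolding v_def using u Ac i by (subst col_mult2[of _ n n _ n]) auto
  finally have "d i = Re (map_vec cnj v \<bullet> (A *\<^sub>v v))"
    by (metis Re_complex_of_real)
  then show ?thesis
    using A_psd v unfolding psd_def by auto
qed

lemma psd_unitary_diagonalisation:
  assumes "psd n A"
  obtains U d where "unitary n U" "A = U * rdiag n d * adj U" "\<And>i. i < n \<Longrightarrow> 0 \<le> d i"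
  using assms hermitian_unitary_diagonalisation psd_unitary_diag_nonneg unfolding psd_def by metis

lemma hermitian_mpow: "hermitian n A \<Longrightarrow> hermitian n (mpow n A t)"
  using hermitian_unitary_diagonalisation mpow_unitary_diag hermitian_unitary_diag by metis

lemma mpow_mpow:
  assumes "hermitian n A"
  shows "mpow n (mpow n A s) t = mpow n A (s * t)"
proof -
  obtain U d where U: "unitary n U" and A: "A = U * rdiag n d * adj U"
    using hermitian_unitary_diagonalisation[OF assms] by blast
  show ?thesis
    using mpow_unitary_diag[OF U A] mpow_unitary_diag[OF U mpow_unitary_diag[OF U A]]
    by (simp add: powr_powr)
qed

lemma mpow_smult:
  assumes "hermitian n A"
  shows "mpow n (complex_of_real r \<cdot>\<^sub>m A) t = complex_of_real (r powr t) \<cdot>\<^sub>m mpow n A t"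
proof -
  obtain U d where U: "unitary n U" and A: "A = U * rdiag n d * adj U"
    using hermitian_unitary_diagonalisation[OF assms] by blast
  note smult = smult_unitary_diag[OF unitaryD(1)[OF U]]
  show ?thesis
    using mpow_unitary_diag[OF U A] mpow_unitary_diag[OF U smult] A
    by (simp add: smult powr_mult)
qed

text \<open>The hypothesis psd is needed since x powr 1 = \<bar>x\<bar>.\<close>
lemma mpow_one:
  assumes "psd n A"
  shows "mpow n A 1 = A"
proof -
  obtain U d where U: "unitary n U" and A: "A = U * rdiag n d * adj U"
    and d: "\<And>i. i < n \<Longrightarrow> 0 \<le> d i"
    using psd_unitary_diagonalisation[OF assms] by blast
  have "rdiag n (\<lambda>i. d i powr 1) = rdiag n d"
    using d by (intro rdiag_cong) simp
  then show ?thesis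
    using mpow_unitary_diag[OF U A] A by simp
qed

text \<open>No positivity is needed: if the trace vanishes, both sides are 0 since 1 / 0 = 0
  and 0 powr t = 0.\<close>
lemma mpow_normpow:
  assumes "hermitian n A"
  shows "mpow n (normpow n A s) t
    = complex_of_real (rtr (mpow n A s) powr - t) \<cdot>\<^sub>m mpow n A (s * t)"
proof -
  obtain U d where U: "unitary n U" and A: "A = U * rdiag n d * adj U"
    using hermitian_unitary_diagonalisation[OF assms] by blast
  have "mtrace (mpow n A s) = complex_of_real (rtr (mpow n A s))"
    using mtrace_unitary_diag[OF U] mpow_unitary_diag[OF U A] by (simp add: rtr_def)
  then have "normpow n A s = complex_of_real (1 / rtr (mpow n A s)) \<cdot>\<^sub>m mpow n A s"
    unfolding normpow_def by simp
  then have "mpow n (normpow n A s) t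
      = complex_of_real ((1 / rtr (mpow n A s)) powr t) \<cdot>\<^sub>m mpow n A (s * t)"
    by (simp only: mpow_smult[OF hermitian_mpow[OF assms]] mpow_mpow[OF assms])
  then show ?thesis
    by (simp add: powr_divide powr_minus_divide)
qed

lemma rtr_mpow_pos:
  assumes "psd n A" "0 < rtr A"
  shows "0 < rtr (mpow n A t)"
proof -
  obtain U d where U: "unitary n U" and A: "A = U * rdiag n d * adj U"
    and d: "\<And>i. i < n \<Longrightarrow> 0 \<le> d i"
    using psd_unitary_diagonalisation[OF assms(1)] by blast
  have "0 < (\<Sum>i<n. d i)"
    using assms(2) mtrace_unitary_diag[OF U] A by (simp add: rtr_def)
  then obtain i where "i < n" "0 < d i"
    by (meson lessThan_iff not_le sum_nonpos)
  then have "0 < (\<Sum>i<n. d i powr t)"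
    by (intro sum_pos2[of _ i]) auto
  then show ?thesis
    using mtrace_unitary_diag[OF U] mpow_unitary_diag[OF U A] by (simp add: rtr_def)
qed

lemma cnj_mult_self: "cnj z * (complex_of_real a * z) = complex_of_real (a * (cmod z)\<^sup>2)"
  using cmod_power2[of z] by (simp add: complex_eq_iff power2_eq_square algebra_simps)

lemma rtr_mult_unitary_diag:
  assumes U: "unitary n U" and V: "unitary n V"
  shows "rtr (U * rdiag n p * adj U * (V * rdiag n r * adj V)) =
    (\<Sum>i<n. \<Sum>j<n. p i * r j * (cmod ((adj V * U) $$ (j, i)))\<^sup>2)"
proof -
  note u = unitaryD[OF U] and v = unitaryD[OF V]
  define M where "M = adj V * U"
  have M: "M \<in> carrier_mat n n"
    unfolding M_def using u v by auto
  have "mtrace (U * rdiag n p * adj U * (V * rdiag n r * adj V))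
      = mtrace (U * (rdiag n p * (adj M * (rdiag n r * adj V))))"
    unfolding M_def using u v by (simp add: adj_mult[of _ n n _ n] square_mult_simps[where n=n])
  also have "\<dots> = mtrace (rdiag n p * (adj M * (rdiag n r * adj V)) * U)"
    using u v M by (intro mtrace_mult_comm[of _ n n]) auto
  also have "rdiag n p * (adj M * (rdiag n r * adj V)) * U = rdiag n p * (adj M * (rdiag n r * M))"
    unfolding M_def using u v by (simp add: square_mult_simps[where n=n])
  also have "mtrace \<dots> = (\<Sum>i<n. complex_of_real (\<Sum>j<n. p i * r j * (cmod (M $$ (j, i)))\<^sup>2))"
  proof -
    have "(rdiag n p * (adj M * (rdiag n r * M))) $$ (i, i)
        = complex_of_real (\<Sum>j<n. p i * r j * (cmod (M $$ (j, i)))\<^sup>2)" if i: "i < n" for i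
    proof -
      have "(rdiag n p * (adj M * (rdiag n r * M))) $$ (i, i)
          = p i * (adj M * (rdiag n r * M)) $$ (i, i)"
        using M i by (subst rdiag_mult_left[of _ n n]) auto
      also have "\<dots> = p i * (\<Sum>j = 0..<n. cnj (M $$ (j, i)) * (r j * M $$ (j, i)))"
        using M i by (simp add: rdiag_mult_left[OF M] scalar_prod_def)
      also have "\<dots> = p i * (\<Sum>j<n. complex_of_real (r j * (cmod (M $$ (j, i)))\<^sup>2))"
        by (auto simp: atLeast0LessThan cnj_mult_self intro!: sum.cong)
      finally show ?thesis
        by (simp add: sum_distrib_left mult.assoc)
    qed
    then show ?thesis
      unfolding mtrace_def using M by simp
  qed
  finally show ?thesis
    unfolding rtr_def M_def by simp
qed

lemma unitary_diag_col_eigenvector: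
  assumes U: "unitary n U" and A: "A = U * rdiag n d * adj U" and i: "i < n"
  shows "A *\<^sub>v col U i = complex_of_real (d i) \<cdot>\<^sub>v col U i"
proof -
  note u = unitaryD[OF U]
  have "A *\<^sub>v col U i = col (A * U) i"
    unfolding A using u i by (subst col_mult2[of _ n n _ n]) auto
  also have "A * U = U * rdiag n d"
    unfolding A using u by (simp add: square_mult_simps[where n=n])
  also have "col \<dots> i = complex_of_real (d i) \<cdot>\<^sub>v col U i"
    using u i by (intro eq_vecI) (auto simp: rdiag_mult_right[of U n n] mult.commute)
  finally show ?thesis .
qed

lemma supp_unitary_diag_coord:
  assumes V: "unitary n V" and \<sigma>: "\<sigma> = V * rdiag n q * adj V"
    and x: "x \<in> supp n \<sigma>" and j: "j < n" "q j = 0"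
  shows "(adj V *\<^sub>v x) $ j = 0"
proof -
  note v = unitaryD[OF V]
  have \<sigma>c: "\<sigma> \<in> carrier_mat n n"
    unfolding \<sigma> using v by auto
  have V\<sigma>: "adj V * \<sigma> = rdiag n q * adj V"
    unfolding \<sigma> using v by (simp add: square_mult_simps[where n=n] unitary_cancel[OF V])
  have eigen_coord: "(adj V *\<^sub>v w) $ j = 0"
    if w: "w \<in> carrier_vec n" "c \<noteq> 0" "\<sigma> *\<^sub>v w = c \<cdot>\<^sub>v w" for w c
  proof -
    have "c * (adj V *\<^sub>v w) $ j = (adj V *\<^sub>v (\<sigma> *\<^sub>v w)) $ j"
      using w v j by (simp add: mult_mat_vec[of _ n n])
    also have "\<dots> = ((rdiag n q * adj V) *\<^sub>v w) $ j"
      unfolding V\<sigma>[symmetric] using w v \<sigma>c by (subst assoc_mult_mat_vec[of _ n n _ n]) auto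
    also have "\<dots> = 0"
      using w v j by (simp add: rdiag_mult_left[of _ n n] scalar_prod_def)
    finally show ?thesis
      using w by simp
  qed
  have "foldr (+) vs (0\<^sub>v n) \<in> carrier_vec n \<and> (adj V *\<^sub>v foldr (+) vs (0\<^sub>v n)) $ j = 0"
    if "\<forall>w \<in> set vs. w \<in> carrier_vec n \<and> (\<exists>c. c \<noteq> 0 \<and> \<sigma> *\<^sub>v w = c \<cdot>\<^sub>v w)" for vs
    using that
  proof (induction vs)
    case Nil
    then show ?case
      using v j by auto
  next
    case (Cons w vs)
    then show ?case
      using v j eigen_coord by (auto simp: mult_add_distrib_mat_vec[of _ n n])
  qed
  then show ?thesis
    using x unfolding supp_def by auto
qed

lemma supp_unitary_diag_overlap:
  assumes U: "unitary n U" and \<rho>: "\<rho> = U * rdiag n p * adj U"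
    and V: "unitary n V" and \<sigma>: "\<sigma> = V * rdiag n q * adj V"
    and sub: "supp n \<rho> \<subseteq> supp n \<sigma>" and i: "i < n" "p i \<noteq> 0"
  shows "\<exists>j<n. q j \<noteq> 0 \<and> (adj V * U) $$ (j, i) \<noteq> 0"
proof -
  define W where "W = adj V * U"
  have W: "unitary n W"
    unfolding W_def using unitary_mult[OF unitary_adj[OF V] U] .
  note u = unitaryD[OF U] and v = unitaryD[OF V] and w = unitaryD[OF W]
  have "\<exists>j<n. W $$ (j, i) \<noteq> 0"
  proof (rule ccontr)
    assume "\<not> ?thesis"
    then have "(adj W * W) $$ (i, i) = 0"
      using w(1) i by (simp add: scalar_prod_def)
    with w i show False
      by simp
  qed
  then obtain j where j: "j < n" "W $$ (j, i) \<noteq> 0"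
    by blast
  have "col U i \<in> supp n \<rho>"
    unfolding supp_def
  proof (intro CollectI exI conjI)
    show "col U i = foldr (+) [col U i] (0\<^sub>v n)"
      using u i by simp
    show "\<forall>v\<in>set [col U i]. v \<in> carrier_vec n \<and> (\<exists>c. c \<noteq> 0 \<and> \<rho> *\<^sub>v v = c \<cdot>\<^sub>v v)"
      using u i unitary_diag_col_eigenvector[OF U \<rho> i(1)] by auto
  qed
  moreover have "(adj V *\<^sub>v col U i) $ j = W $$ (j, i)"
    unfolding W_def using u v i j by (subst col_mult2[of _ n n _ n, symmetric]) auto
  ultimately have "q j \<noteq> 0"
    using supp_unitary_diag_coord[OF V \<sigma> _ j(1)] sub j(2) by auto
  then show ?thesis
    using j unfolding W_def by blast
qed

text \<open>An eigenvector of \<rho> for an eigenvalue p_i > 0 lies in supp \<sigma>, hence overlaps an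
  eigenvector of \<sigma> for some q_j > 0; this makes one term of the double sum in
  rtr_mult_unitary_diag positive.\<close>
lemma rtr_mult_mpow_pos:
  assumes \<rho>: "psd n \<rho>" "0 < rtr \<rho>" and \<sigma>: "psd n \<sigma>" and sub: "supp n \<rho> \<subseteq> supp n \<sigma>"
  shows "0 < rtr (\<rho> * mpow n \<sigma> t)"
proof -
  obtain U p where U: "unitary n U" and \<rho>_eq: "\<rho> = U * rdiag n p * adj U"
    and p: "\<And>i. i < n \<Longrightarrow> 0 \<le> p i"
    using psd_unitary_diagonalisation[OF \<rho>(1)] by blast
  obtain V q where V: "unitary n V" and \<sigma>_eq: "\<sigma> = V * rdiag n q * adj V"
    and q: "\<And>i. i < n \<Longrightarrow> 0 \<le> q i"
    using psd_unitary_diagonalisation[OF \<sigma>] by blast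
  have "0 < (\<Sum>i<n. p i)"
    using \<rho>(2) mtrace_unitary_diag[OF U] \<rho>_eq by (simp add: rtr_def)
  then obtain i where i: "i < n" "0 < p i"
    by (meson lessThan_iff not_le sum_nonpos)
  then obtain j where j: "j < n" "q j \<noteq> 0" "(adj V * U) $$ (j, i) \<noteq> 0"
    using supp_unitary_diag_overlap[OF U \<rho>_eq V \<sigma>_eq sub] by force
  have inner: "0 < (\<Sum>j<n. p i * q j powr t * (cmod ((adj V * U) $$ (j, i)))\<^sup>2)"
    using i j q by (intro sum_pos2[of _ j]) auto
  have "0 < (\<Sum>i<n. \<Sum>j<n. p i * q j powr t * (cmod ((adj V * U) $$ (j, i)))\<^sup>2)"
    by (rule sum_pos2[of _ i]) (use i inner p in \<open>auto intro!: sum_nonneg\<close>)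
  then show ?thesis
    unfolding \<rho>_eq mpow_unitary_diag[OF V \<sigma>_eq] rtr_mult_unitary_diag[OF U V] .
qed

lemma rtr_mult_mpow_normpow:
  assumes \<rho>: "psd n \<rho>" and \<sigma>: "hermitian n \<sigma>" and "\<alpha> \<noteq> 0"
  shows "rtr (mpow n (normpow n \<rho> \<alpha>) (1 / \<alpha>) * mpow n (normpow n \<sigma> \<alpha>) (1 - 1 / \<alpha>))
    = rtr (mpow n \<rho> \<alpha>) powr (- 1 / \<alpha>) * rtr (mpow n \<sigma> \<alpha>) powr (1 / \<alpha> - 1)
      * rtr (\<rho> * mpow n \<sigma> (\<alpha> - 1))"
proof -
  have \<rho>_herm: "hermitian n \<rho>"
    using \<rho> unfolding psd_def by auto
  have "mpow n (normpow n \<rho> \<alpha>) (1 / \<alpha>) = complex_of_real (rtr (mpow n \<rho> \<alpha>) powr (- 1 / \<alpha>)) \<cdot>\<^sub>m \<rho>"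
    using mpow_normpow[OF \<rho>_herm] mpow_one[OF \<rho>] assms(3) by simp
  moreover have "mpow n (normpow n \<sigma> \<alpha>) (1 - 1 / \<alpha>)
      = complex_of_real (rtr (mpow n \<sigma> \<alpha>) powr (1 / \<alpha> - 1)) \<cdot>\<^sub>m mpow n \<sigma> (\<alpha> - 1)"
    using mpow_normpow[OF \<sigma>] assms(3) by (simp add: algebra_simps)
  moreover have "\<rho> \<in> carrier_mat n n" "mpow n \<sigma> (\<alpha> - 1) \<in> carrier_mat n n"
    using \<rho>_herm hermitian_mpow[OF \<sigma>] unfolding hermitian_def by auto
  ultimately show ?thesis
    by (simp add: mult_smult_assoc_mat[of _ n n _ n] mult_smult_distrib[of _ n n _ n]
        rtr_smult[of _ n])
qed

theorem lemma9:
  fixes n :: nat and \<alpha> :: real and \<rho> \<sigma> :: "complex mat"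
  assumes "\<alpha> > 0" and "\<alpha> \<noteq> 1"
    and "density n \<rho>" and "density n \<sigma>"
    and "supp n \<rho> \<subseteq> supp n \<sigma>"
  shows "S_alpha n \<alpha> \<rho> \<sigma> = petz n (1 / \<alpha>) (normpow n \<rho> \<alpha>) (normpow n \<sigma> \<alpha>)"
proof -
  have \<rho>: "psd n \<rho>" "rtr \<rho> = 1" and \<sigma>: "psd n \<sigma>" "rtr \<sigma> = 1"
    using assms(3,4) unfolding density_def rtr_def by auto
  then have \<sigma>_herm: "hermitian n \<sigma>"
    unfolding psd_def by auto
  define c s T where "c = rtr (mpow n \<rho> \<alpha>)" and "s = rtr (mpow n \<sigma> \<alpha>)"
    and "T = rtr (\<rho> * mpow n \<sigma> (\<alpha> - 1))"
  have pos: "0 < c" "0 < s" "0 < T"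
    unfolding c_def s_def T_def using \<rho> \<sigma> assms(5)
    by (auto intro: rtr_mpow_pos rtr_mult_mpow_pos)
  have "petz n (1 / \<alpha>) (normpow n \<rho> \<alpha>) (normpow n \<sigma> \<alpha>)
      = 1 / (1 / \<alpha> - 1) * ln (c powr (- 1 / \<alpha>) * s powr (1 / \<alpha> - 1) * T)"
    unfolding petz_def c_def s_def T_def
    using rtr_mult_mpow_normpow[OF \<rho>(1) \<sigma>_herm] assms(1) by simp
  also have "\<dots> = \<alpha> / (1 - \<alpha>) * ln T - 1 / (1 - \<alpha>) * ln c + ln s"
  proof -
    have "1 - \<alpha> \<noteq> 0" "\<alpha> \<noteq> 0"
      using assms(1,2) by auto
    then show ?thesis
      using pos by (simp add: ln_mult divide_simps)
  qed
  also have "\<dots> = S_alpha n \<alpha> \<rho> \<sigma>"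
    unfolding S_alpha_def c_def s_def T_def ..
  finally show ?thesis ..
qed

end
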